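(* Let $Z$ be the transport operator. Then: (1) $\ker Z=\ker|Z|=\bigoplus_{k=1}^{N-1}\mathrm{span}\{\varphi_{a_k}:a=n_{k+1},\dots,n_k-1\}$; (2) the restriction of $Z$ to $\operatorname{ran}|Z|$ and the restriction of $Z^*$ to $ZZ^*\mathcal H$ are isometric isomorphisms between $\operatorname{ran}|Z|$ and $ZZ^*\mathcal H$; (3) for $k=1,\dots,N-1$ and $a=0,\dots,n_{k+1}-1$, $Z\varphi_{a_k}=|a_{k+1}\rangle$ and $Z^*|a_{k+1}\rangle=\varphi_{a_k}$.
   Context: Fix $N\ge2$ and integers $n_1\ge n_2\ge\dots\ge n_N\ge1$. Let $\mathcal H=\bigoplus_{k=1}^N E_k$ where $E_k$ has orthonormal basis $\{|a_k\rangle:0\le a\le n_k-1\}$, and let $P_k$ be the orthogonal projection onto $E_k$. For vectors $x,y$, $|x\rangle\langle y|$ is the operator $u\mapsto\langle y,u\rangle x$. $\zeta_k=e^{2\pi i/n_k}$, $\varphi_{a_k}=n_k^{-1/2}\sum_{b=0}^{n_k-1}\zeta_k^{-ba}|b_k\rangle$. For $1\le k\le N-1$, $Z_k=n_k^{-1/2}\sum_{b=0}^{n_{k+1}-1}\sum_{a=0}^{n_k-1}\zeta_k^{ba}|b_{k+1}\rangle\langle a_k|$. The transport operator $Z=\bigoplus_{k=1}^{N-1}Z_k$ is the operator from $\bigoplus_{k=1}^{N-1}E_k$ into $\mathcal H$ which equals $Z_k$ on $E_k$; $Z^*$ is its adjoint (mapping $\bigoplus_{k=2}^NE_k$ into $\bigoplus_{k=1}^{N-1}E_k$)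 and $|Z|=Z^*Z$. *)

theory Defs
  imports Complex_Main
begin

text \<open>Vectors of H = E_1 + ... + E_N are represented as functions
  v :: nat => nat => complex, where v k a is the coordinate of v along the
  basis vector a_k (1 <= k <= N, a < n k); all other values are zero.\<close>

type_synonym vec = "nat \<Rightarrow> nat \<Rightarrow> complex"

definition Hsp :: "nat \<Rightarrow> (nat \<Rightarrow> nat) \<Rightarrow> vec set" where
  "Hsp N n = {v. \<forall>k a. \<not> (1 \<le> k \<and> k \<le> N \<and> a < n k) \<longrightarrow> v k a = 0}"

definition Zdom :: "nat \<Rightarrow> (nat \<Rightarrow> nat) \<Rightarrow> vec set" where
  "Zdom N n = {v \<in> Hsp N n. \<forall>a. v N a = 0}"

definition hinner :: "nat \<Rightarrow> (nat \<Rightarrow> nat) \<Rightarrow> vec \<Rightarrow> vec \<Rightarrow> complex" where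
  "hinner N n x y = (\<Sum>k\<in>{1..N}. \<Sum>a<n k. cnj (x k a) * y k a)"

definition hnorm :: "nat \<Rightarrow> (nat \<Rightarrow> nat) \<Rightarrow> vec \<Rightarrow> real" where
  "hnorm N n x = sqrt (Re (hinner N n x x))"

definition zeta :: "(nat \<Rightarrow> nat) \<Rightarrow> nat \<Rightarrow> complex" where
  "zeta n k = cis (2 * pi / real (n k))"

definition ket :: "nat \<Rightarrow> nat \<Rightarrow> vec" where
  "ket k a = (\<lambda>j b. if j = k \<and> b = a then 1 else 0)"

definition phi :: "(nat \<Rightarrow> nat) \<Rightarrow> nat \<Rightarrow> nat \<Rightarrow> vec" where
  "phi n k a = (\<lambda>j b. if j = k \<and> b < n k
      then complex_of_real (1 / sqrt (real (n k))) * inverse (zeta n k ^ (b * a)) else 0)"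

text \<open>The transport operator Z = (+)_{k=1}^{N-1} Z_k, where
  Z_k = n_k^{-1/2} sum_{b<n_{k+1}} sum_{a<n_k} zeta_k^{ba} |b_{k+1}><a_k|.\<close>
definition Zop :: "nat \<Rightarrow> (nat \<Rightarrow> nat) \<Rightarrow> vec \<Rightarrow> vec" where
  "Zop N n x = (\<lambda>j b. if 2 \<le> j \<and> j \<le> N \<and> b < n j
      then (\<Sum>a<n (j - 1). complex_of_real (1 / sqrt (real (n (j - 1))))
                             * zeta n (j - 1) ^ (b * a) * x (j - 1) a)
      else 0)"

text \<open>Its adjoint Z^* (conjugate transpose), mapping (+)_{k=2}^N E_k into
  (+)_{k=1}^{N-1} E_k (the E_1-component of its argument is ignored).\<close>
definition Zadj :: "nat \<Rightarrow> (nat \<Rightarrow> nat) \<Rightarrow> vec \<Rightarrow> vec" where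
  "Zadj N n y = (\<lambda>k a. if 1 \<le> k \<and> k \<le> N - 1 \<and> a < n k
      then (\<Sum>b<n (k + 1). complex_of_real (1 / sqrt (real (n k)))
                             * cnj (zeta n k ^ (b * a)) * y (k + 1) b)
      else 0)"

text \<open>|Z| = Z^* Z (as in the paper).\<close>
definition absZ :: "nat \<Rightarrow> (nat \<Rightarrow> nat) \<Rightarrow> vec \<Rightarrow> vec" where
  "absZ N n x = Zadj N n (Zop N n x)"

definition zerovec :: vec where "zerovec = (\<lambda>j b. 0)"

definition cspan_fam :: "'i set \<Rightarrow> ('i \<Rightarrow> vec) \<Rightarrow> vec set" where
  "cspan_fam I f = {(\<lambda>j b. \<Sum>i\<in>I. c i * f i j b) | c. True}"

definition isometric_iso :: "nat \<Rightarrow> (nat \<Rightarrow> nat) \<Rightarrow> (vec \<Rightarrow> vec) \<Rightarrow> vec set \<Rightarrow> vec set \<Rightarrow> bool" where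
  "isometric_iso N n T A B \<longleftrightarrow> bij_betw T A B \<and> (\<forall>x\<in>A. hnorm N n (T x) = hnorm N n x)"

end

theory Submission
  imports Defs
begin

(* On each block E_k the vectors phi_{a_k} form the Fourier basis, which is orthonormal by the
   orthogonality of the characters of Z/n_k. The k-th block of Z x lists the Fourier coefficients
   <phi_{b_k}, x_k> for b < n_{k+1}; so Z maps phi_{a_k} to |a_{k+1}> for a < n_{k+1} and to 0
   for the remaining a, which span the kernel. Since n_{k+1} <= n_k, Z Z^* is the identity on
   E_2 + ... + E_N and Z^* is isometric there. Finally <Z x, Z x> = <Z^* Z x, x> gives
   ker Z = ker Z^* Z. *)

lemma sum_root_unity_power_eq_0:
  assumes "0 < d" "d < m"
  shows "(\<Sum>a<m. (cis (2 * pi / real m) ^ d) ^ a) = 0"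
proof -
  let ?w = "cis (2 * pi / real m) ^ d"
  have "?w ^ m = cis (2 * pi * real d)"
    using assms by (simp add: power_mult[symmetric] DeMoivre field_simps)
  then have "?w ^ m = 1" by simp
  moreover have "?w \<noteq> 1"
  proof -
    have "inj_on (\<lambda>k. cis (2 * pi * real k / real m)) {..<m}"
      using bij_betw_roots_unity[of m] assms by (simp add: bij_betw_def)
    then have "cis (2 * pi * real d / real m) \<noteq> cis (2 * pi * real 0 / real m)"
      using assms by (fastforce dest: inj_onD)
    then show ?thesis by (simp add: DeMoivre mult_ac)
  qed
  ultimately show ?thesis by (simp add: geometric_sum)
qed

lemma roots_unity_orthogonality:
  assumes "b < m" "c < m"
  shows "(\<Sum>a<m. cis (2 * pi / real m) ^ (b * a) * cnj (cis (2 * pi / real m) ^ (c * a)))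
         = (if b = c then of_nat m else 0)"
proof -
  let ?z = "cis (2 * pi / real m)"
  have unit: "?z ^ k * cnj (?z ^ k) = 1" for k
    by (simp add: cis_cnj power_mult_distrib[symmetric] cis_mult)
  have off_diagonal: "(\<Sum>a<m. ?z ^ (b * a) * cnj (?z ^ (c * a))) = 0" if "c < b" "b < m" for b c
  proof -
    have "?z ^ (b * a) * cnj (?z ^ (c * a)) = (?z ^ (b - c)) ^ a" for a
    proof -
      have "?z ^ (b * a) = ?z ^ (c * a) * (?z ^ (b - c)) ^ a"
        using that by (simp add: power_add[symmetric] power_mult[symmetric] algebra_simps)
      then show ?thesis using unit[of "c * a"] by (simp add: algebra_simps)
    qed
    then show ?thesis using that by (simp add: sum_root_unity_power_eq_0)
  qed
  consider "b = c" | "c < b" | "b < c" by linarith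
  then show ?thesis
  proof cases
    case 3
    then have "cnj (\<Sum>a<m. ?z ^ (c * a) * cnj (?z ^ (b * a))) = 0"
      using off_diagonal assms by simp
    then show ?thesis using 3 by (simp add: mult.commute)
  qed (use unit off_diagonal assms in simp_all)
qed

lemma phi_apply:
  "phi n k a j b = (if j = k \<and> b < n k
     then complex_of_real (1 / sqrt (real (n k))) * cnj (zeta n k ^ (a * b)) else 0)"
proof -
  have "inverse (zeta n k ^ (b * a)) = cnj (zeta n k ^ (a * b))"
    by (simp add: zeta_def mult.commute flip: complex_cnj_power power_inverse cis_cnj)
  then show ?thesis by (simp add: phi_def)
qed

lemma phi_orthonormal:
  assumes "b < n k" "c < n k"
  shows "(\<Sum>a<n k. cnj (phi n k b k a) * phi n k c k a) = (if b = c then 1 else 0)"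
proof -
  have "n k > 0" using assms by simp
  then have norm: "complex_of_real (1 / sqrt (real (n k))) * complex_of_real (1 / sqrt (real (n k)))
      * of_nat (n k) = 1"
    by (simp flip: of_real_mult)
  have "(\<Sum>a<n k. cnj (phi n k b k a) * phi n k c k a)
      = complex_of_real (1 / sqrt (real (n k))) * complex_of_real (1 / sqrt (real (n k)))
        * (\<Sum>a<n k. zeta n k ^ (b * a) * cnj (zeta n k ^ (c * a)))"
    by (simp add: phi_apply sum_distrib_left mult_ac)
  also have "\<dots> = (if b = c then 1 else 0)"
    using roots_unity_orthogonality[OF assms] norm by (simp add: zeta_def)
  finally show ?thesis .
qed

lemma phi_symmetric: "a < n k \<Longrightarrow> b < n k \<Longrightarrow> phi n k a k b = phi n k b k a"
  by (simp add: phi_apply mult.commute)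

lemma phi_expansion:
  fixes x :: "nat \<Rightarrow> complex"
  assumes "a < n k"
  shows "(\<Sum>b<n k. (\<Sum>c<n k. cnj (phi n k b k c) * x c) * phi n k b k a) = x a"
proof -
  have "(\<Sum>b<n k. (\<Sum>c<n k. cnj (phi n k b k c) * x c) * phi n k b k a)
      = (\<Sum>b<n k. \<Sum>c<n k. x c * (cnj (phi n k b k c) * phi n k b k a))"
    by (simp add: sum_distrib_left sum_distrib_right mult_ac)
  also have "\<dots> = (\<Sum>c<n k. \<Sum>b<n k. x c * (cnj (phi n k b k c) * phi n k b k a))"
    by (rule sum.swap)
  also have "\<dots> = (\<Sum>c<n k. x c * (\<Sum>b<n k. cnj (phi n k c k b) * phi n k a k b))"
    using assms by (simp add: sum_distrib_left phi_symmetric)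
  also have "\<dots> = x a"
    using assms by (simp add: phi_orthonormal if_distrib cong: if_cong)
  finally show ?thesis .
qed

lemma sum_phi_apply:
  assumes "finite I"
  shows "(\<Sum>i\<in>I. c i * (case i of (k, a) \<Rightarrow> phi n k a) j b)
       = (\<Sum>a\<in>{a. (j, a) \<in> I}. c (j, a) * phi n j a j b)"
proof -
  have "(\<Sum>i\<in>I. c i * (case i of (k, a) \<Rightarrow> phi n k a) j b)
      = (\<Sum>i\<in>Pair j ` {a. (j, a) \<in> I}. c i * (case i of (k, a) \<Rightarrow> phi n k a) j b)"
    using assms by (intro sum.mono_neutral_right) (auto simp: phi_apply image_iff split: if_splits)
  also have "\<dots> = (\<Sum>a\<in>{a. (j, a) \<in> I}. c (j, a) * phi n j a j b)"
    by (simp add: sum.reindex inj_on_def)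
  finally show ?thesis .
qed

definition Zcodom :: "nat \<Rightarrow> (nat \<Rightarrow> nat) \<Rightarrow> vec set" where
  "Zcodom N n = {y \<in> Hsp N n. \<forall>b. y 1 b = 0}"

lemma Zop_in_Zcodom: "Zop N n x \<in> Zcodom N n"
  by (simp add: Zcodom_def Hsp_def Zop_def)

lemma Zadj_in_Zdom: "Zadj N n y \<in> Zdom N n"
  by (auto simp: Zdom_def Hsp_def Zadj_def)

lemma Zop_apply_Suc:
  assumes "1 \<le> k" "k < N" "b < n (Suc k)"
  shows "Zop N n x (Suc k) b = (\<Sum>a<n k. cnj (phi n k b k a) * x k a)"
  using assms by (auto simp: Zop_def phi_apply mult.commute intro!: sum.cong)

lemma Zadj_apply:
  assumes "1 \<le> k" "k < N" "a < n k"
  shows "Zadj N n y k a = (\<Sum>c<n (Suc k). y (Suc k) c * phi n k c k a)"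
  using assms by (auto simp: Zadj_def phi_apply mult.commute intro!: sum.cong)

lemma Zop_sum:
  "Zop N n (\<lambda>j b. \<Sum>i\<in>I. c i * f i j b) = (\<lambda>j b. \<Sum>i\<in>I. c i * Zop N n (f i) j b)"
proof (intro ext)
  fix j b
  show "Zop N n (\<lambda>j b. \<Sum>i\<in>I. c i * f i j b) j b = (\<Sum>i\<in>I. c i * Zop N n (f i) j b)"
  proof (cases "2 \<le> j \<and> j \<le> N \<and> b < n j")
    case True
    then show ?thesis
      by (simp add: Zop_def sum_distrib_left mult.left_commute sum.swap[of _ I])
  next
    case False
    then show ?thesis by (simp only: Zop_def if_not_P if_False mult_zero_right sum.neutral_const)
  qed
qed

lemma hinner_Zadj: "hinner N n (Zadj N n y) x = hinner N n y (Zop N n x)"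
proof -
  define T where "T k = (\<Sum>a<n k. \<Sum>c<n (Suc k). cnj (y (Suc k) c) * cnj (phi n k c k a) * x k a)"
    for k
  have "Zadj N n y N a = 0" for a
    by (auto simp: Zadj_def)
  then have "hinner N n (Zadj N n y) x = (\<Sum>k\<in>{1..<N}. \<Sum>a<n k. cnj (Zadj N n y k a) * x k a)"
    unfolding hinner_def by (intro sum.mono_neutral_right) auto
  also have "\<dots> = sum T {1..<N}"
    by (auto simp: T_def Zadj_apply sum_distrib_right intro!: sum.cong)
  finally have adj: "hinner N n (Zadj N n y) x = sum T {1..<N}" .
  have "j < 2 \<Longrightarrow> Zop N n x j b = 0" for j b
    by (simp add: Zop_def)
  then have "hinner N n y (Zop N n x) = (\<Sum>j\<in>Suc ` {1..<N}. \<Sum>b<n j. cnj (y j b) * Zop N n x j b)"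
    unfolding hinner_def by (intro sum.mono_neutral_right) auto
  also have "\<dots> = (\<Sum>k\<in>{1..<N}. \<Sum>b<n (Suc k). cnj (y (Suc k) b) * Zop N n x (Suc k) b)"
    by (simp add: sum.reindex del: image_Suc_atLeastLessThan)
  also have "\<dots> = sum T {1..<N}"
    unfolding T_def
  proof (rule sum.cong[OF refl])
    fix k assume "k \<in> {1..<N}"
    then have "(\<Sum>b<n (Suc k). cnj (y (Suc k) b) * Zop N n x (Suc k) b)
        = (\<Sum>b<n (Suc k). \<Sum>a<n k. cnj (y (Suc k) b) * cnj (phi n k b k a) * x k a)"
      by (auto simp: Zop_apply_Suc sum_distrib_left mult.assoc intro: sum.cong)
    then show "(\<Sum>b<n (Suc k). cnj (y (Suc k) b) * Zop N n x (Suc k) b)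
        = (\<Sum>a<n k. \<Sum>c<n (Suc k). cnj (y (Suc k) c) * cnj (phi n k c k a) * x k a)"
      by (simp add: sum.swap[of _ "{..<n k}"])
  qed
  finally show ?thesis using adj by simp
qed

lemma hinner_self_eq_0:
  assumes "v \<in> Hsp N n" "hinner N n v v = 0"
  shows "v = zerovec"
proof (intro ext)
  fix k a
  have "complex_of_real (\<Sum>k\<in>{1..N}. \<Sum>a<n k. (cmod (v k a))\<^sup>2) = hinner N n v v"
    by (simp only: hinner_def of_real_sum complex_norm_square mult.commute)
  also have "\<dots> = 0" by (fact assms(2))
  finally have "(\<Sum>k\<in>{1..N}. \<Sum>a<n k. (cmod (v k a))\<^sup>2) = 0"
    by (simp only: of_real_eq_0_iff)
  then have "\<forall>k\<in>{1..N}. \<forall>a<n k. v k a = 0"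
    by (simp add: sum_nonneg_eq_0_iff sum_nonneg)
  then show "v k a = zerovec k a"
    using assms(1) by (cases "1 \<le> k \<and> k \<le> N \<and> a < n k") (auto simp: Hsp_def zerovec_def)
qed

lemma ker_Zop_eq_ker_absZ:
  "{x \<in> Zdom N n. Zop N n x = zerovec} = {x \<in> Zdom N n. absZ N n x = zerovec}"
proof -
  have "Zop N n x = zerovec" if "absZ N n x = zerovec" for x
  proof -
    have "hinner N n (Zop N n x) (Zop N n x) = hinner N n (absZ N n x) x"
      by (simp add: absZ_def hinner_Zadj)
    also have "\<dots> = 0"
      using that by (simp add: hinner_def zerovec_def)
    finally show ?thesis
      using hinner_self_eq_0[of "Zop N n x" N n] Zop_in_Zcodom[of N n x] by (simp add: Zcodom_def)
  qed
  moreover have "Zadj N n zerovec = zerovec"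
    by (simp add: Zadj_def zerovec_def fun_eq_iff)
  ultimately show ?thesis
    by (auto simp: absZ_def)
qed

lemma Zop_phi:
  assumes "1 \<le> k" "k < N" "a < n k" "n (Suc k) \<le> n k"
  shows "Zop N n (phi n k a) = (\<lambda>j b. if j = Suc k \<and> b < n (Suc k) \<and> b = a then 1 else 0)"
proof (intro ext)
  fix j b
  show "Zop N n (phi n k a) j b = (if j = Suc k \<and> b < n (Suc k) \<and> b = a then 1 else 0)"
  proof (cases "j = Suc k \<and> b < n (Suc k)")
    case True
    then show ?thesis
      using assms by (auto simp: Zop_apply_Suc phi_orthonormal)
  next
    case False
    then have "j - 1 \<noteq> k \<or> \<not> (2 \<le> j \<and> j \<le> N \<and> b < n j)"
      by auto
    then show ?thesis
      using False by (auto simp: Zop_def phi_apply)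
  qed
qed

lemma Zadj_ket:
  assumes "1 \<le> k" "k < N" "a < n (Suc k)"
  shows "Zadj N n (ket (Suc k) a) = phi n k a"
proof (intro ext)
  fix j b
  show "Zadj N n (ket (Suc k) a) j b = phi n k a j b"
  proof (cases "j = k \<and> b < n k")
    case True
    then show ?thesis
      using assms by (simp add: Zadj_apply ket_def flip: of_bool_def)
  next
    case False
    then consider "j \<noteq> k" | "j = k" "\<not> b < n k" by blast
    then show ?thesis
      by cases (simp_all add: Zadj_def phi_apply ket_def)
  qed
qed

lemma ker_Zop_eq_span:
  "{x \<in> Zdom N n. Zop N n x = zerovec}
     = cspan_fam {(k, a). 1 \<le> k \<and> k \<le> N - 1 \<and> n (k + 1) \<le> a \<and> a < n k} (\<lambda>(k, a). phi n k a)"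
proof -
  define I where "I = {(k, a). 1 \<le> k \<and> k \<le> N - 1 \<and> n (k + 1) \<le> a \<and> a < n k}"
  let ?K = "{x \<in> Zdom N n. Zop N n x = zerovec}" and ?phi = "\<lambda>(k, a). phi n k a"
  have "finite I"
    by (rule finite_subset[of _ "Sigma {1..<N} (\<lambda>k. {..<n k})"]) (auto simp: I_def)
  moreover have "{a. (j, a) \<in> I} = (if 1 \<le> j \<and> j < N then {n (Suc j)..<n j} else {})" for j
    by (auto simp: I_def)
  ultimately have span_apply: "(\<Sum>i\<in>I. c i * ?phi i j b)
      = (if 1 \<le> j \<and> j < N then \<Sum>a\<in>{n (Suc j)..<n j}. c (j, a) * phi n j a j b else 0)" for c j b
    by (simp add: sum_phi_apply)
  have "cspan_fam I ?phi \<subseteq> ?K"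
  proof
    fix v assume "v \<in> cspan_fam I ?phi"
    then obtain c where v: "v = (\<lambda>j b. \<Sum>i\<in>I. c i * ?phi i j b)"
      by (auto simp: cspan_fam_def)
    have "v \<in> Zdom N n"
      by (auto simp: v Zdom_def Hsp_def span_apply phi_apply)
    moreover have "Zop N n v = zerovec"
      by (auto simp: v I_def Zop_sum Zop_phi zerovec_def intro!: ext sum.neutral)
    ultimately show "v \<in> ?K" by simp
  qed
  moreover have "?K \<subseteq> cspan_fam I ?phi"
  proof
    fix x assume "x \<in> ?K"
    then have x: "x \<in> Zdom N n" "Zop N n x = zerovec" by auto
    (* Fourier coefficients of x; those with a < n (Suc k) are the entries of Z x. *)
    define c where "c = (\<lambda>(k, a). \<Sum>a'<n k. cnj (phi n k a k a') * x k a')"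
    have "x j b = (\<Sum>i\<in>I. c i * ?phi i j b)" for j b
    proof (cases "1 \<le> j \<and> j < N \<and> b < n j")
      case True
      have "c (j, a) = 0" if "a < n (Suc j)" for a
        using True that x(2) Zop_apply_Suc[of j N a n x] by (simp add: c_def zerovec_def)
      then have "(\<Sum>a\<in>{n (Suc j)..<n j}. c (j, a) * phi n j a j b) = (\<Sum>a<n j. c (j, a) * phi n j a j b)"
        by (intro sum.mono_neutral_left) auto
      also have "\<dots> = x j b"
        using phi_expansion[of b n j "x j"] True by (simp add: c_def)
      finally show ?thesis
        using True by (simp add: span_apply)
    next
      case False
      then have "x j b = 0"
        using x(1) by (cases "j = N") (auto simp: Zdom_def Hsp_def)
      with False show ?thesis
        by (auto simp: span_apply phi_apply)
    qed
    then show "x \<in> cspan_fam I ?phi"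
      unfolding cspan_fam_def by blast
  qed
  ultimately show ?thesis
    unfolding I_def by blast
qed

lemma isometric_iso_inverse_pair:
  assumes "\<And>y. y \<in> B \<Longrightarrow> f (g y) = y" "\<And>y. y \<in> B \<Longrightarrow> hnorm N n (g y) = hnorm N n y"
  shows "isometric_iso N n f (g ` B) B \<and> isometric_iso N n g B (g ` B)"
proof -
  have "bij_betw g B (g ` B)"
    by (metis assms(1) bij_betw_imageI inj_on_inverseI)
  moreover have "bij_betw f (g ` B) B"
    by (rule bij_betw_byWitness[where f' = g]) (use assms(1) in auto)
  ultimately show ?thesis
    using assms by (auto simp: isometric_iso_def)
qed

context
  fixes N :: nat and n :: "nat \<Rightarrow> nat"
  assumes ndec: "\<And>k. 1 \<le> k \<Longrightarrow> k < N \<Longrightarrow> n (Suc k) \<le> n k"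
begin

lemma Zop_phi_eq_ket:
  assumes "1 \<le> k" "k < N" "a < n (Suc k)"
  shows "Zop N n (phi n k a) = ket (Suc k) a"
  using assms ndec[OF assms(1,2)] by (auto simp: Zop_phi ket_def fun_eq_iff)

lemma Zop_Zadj:
  assumes y: "y \<in> Zcodom N n"
  shows "Zop N n (Zadj N n y) = y"
proof (intro ext)
  fix j b
  show "Zop N n (Zadj N n y) j b = y j b"
  proof (cases "2 \<le> j \<and> j \<le> N \<and> b < n j")
    case True
    define k where "k = j - 1"
    have k: "j = Suc k" "1 \<le> k" "k < N" "b < n (Suc k)"
      using True by (auto simp: k_def)
    have "Zop N n (Zadj N n y) (Suc k) b
        = (\<Sum>a<n k. cnj (phi n k b k a) * (\<Sum>c<n (Suc k). y (Suc k) c * phi n k c k a))"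
      using k by (auto simp: Zop_apply_Suc Zadj_apply intro!: sum.cong)
    also have "\<dots> = (\<Sum>c<n (Suc k). y (Suc k) c * (\<Sum>a<n k. cnj (phi n k b k a) * phi n k c k a))"
      by (simp add: sum_distrib_left mult.left_commute sum.swap[of _ "{..<n k}"])
    also have "\<dots> = y (Suc k) b"
      using k ndec[of k] by (simp add: phi_orthonormal if_distrib cong: if_cong)
    finally show ?thesis using k by simp
  next
    case False
    then have "y j b = 0"
      using y by (cases "j = 1") (auto simp: Zcodom_def Hsp_def)
    with False show ?thesis by (auto simp: Zop_def)
  qed
qed

lemma hnorm_Zadj: "y \<in> Zcodom N n \<Longrightarrow> hnorm N n (Zadj N n y) = hnorm N n y"
  by (simp add: hnorm_def hinner_Zadj Zop_Zadj ndec)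

lemma Zop_Zadj_image: "Zop N n ` Zadj N n ` Hsp N n = Zcodom N n"
proof
  show "Zcodom N n \<subseteq> Zop N n ` Zadj N n ` Hsp N n"
  proof
    fix y assume "y \<in> Zcodom N n"
    then have "y = Zop N n (Zadj N n y)" "y \<in> Hsp N n"
      by (simp_all add: Zop_Zadj ndec Zcodom_def)
    then show "y \<in> Zop N n ` Zadj N n ` Hsp N n" by blast
  qed
qed (auto simp: Zop_in_Zcodom)

lemma absZ_image: "absZ N n ` Zdom N n = Zadj N n ` Zcodom N n"
proof
  show "Zadj N n ` Zcodom N n \<subseteq> absZ N n ` Zdom N n"
  proof
    fix x assume "x \<in> Zadj N n ` Zcodom N n"
    then obtain y where "y \<in> Zcodom N n" "x = Zadj N n y" by blast
    then have "x = absZ N n x" "x \<in> Zdom N n"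
      by (simp_all add: absZ_def Zop_Zadj ndec Zadj_in_Zdom)
    then show "x \<in> absZ N n ` Zdom N n" by blast
  qed
qed (auto simp: absZ_def Zop_in_Zcodom)

lemma isometric_iso_Zop_Zadj:
  "isometric_iso N n (Zop N n) (Zadj N n ` Zcodom N n) (Zcodom N n)
   \<and> isometric_iso N n (Zadj N n) (Zcodom N n) (Zadj N n ` Zcodom N n)"
  by (intro isometric_iso_inverse_pair) (simp_all add: Zop_Zadj hnorm_Zadj)

end

theorem proposition2p9:
  fixes N :: nat and n :: "nat \<Rightarrow> nat"
  assumes N2: "N \<ge> 2"
    and npos: "\<forall>k\<in>{1..N}. n k \<ge> 1"
    and ndec: "\<forall>k. 1 \<le> k \<and> k < N \<longrightarrow> n (k + 1) \<le> n k"
  shows "{x \<in> Zdom N n. Zop N n x = zerovec} = {x \<in> Zdom N n. absZ N n x = zerovec}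
       \<and> {x \<in> Zdom N n. Zop N n x = zerovec}
           = cspan_fam {(k, a). 1 \<le> k \<and> k \<le> N - 1 \<and> n (k + 1) \<le> a \<and> a < n k}
                       (\<lambda>(k, a). phi n k a)
       \<and> isometric_iso N n (Zop N n) (absZ N n ` Zdom N n) (Zop N n ` Zadj N n ` Hsp N n)
       \<and> isometric_iso N n (Zadj N n) (Zop N n ` Zadj N n ` Hsp N n) (absZ N n ` Zdom N n)
       \<and> (\<forall>k a. 1 \<le> k \<and> k \<le> N - 1 \<and> a < n (k + 1) \<longrightarrow>
              Zop N n (phi n k a) = ket (k + 1) a \<and> Zadj N n (ket (k + 1) a) = phi n k a)"
proof -
  have ndec': "\<And>k. 1 \<le> k \<Longrightarrow> k < N \<Longrightarrow> n (Suc k) \<le> n k"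
    using ndec by simp
  have "Zop N n (phi n k a) = ket (k + 1) a \<and> Zadj N n (ket (k + 1) a) = phi n k a"
    if "1 \<le> k \<and> k \<le> N - 1 \<and> a < n (k + 1)" for k a
    using that Zop_phi_eq_ket[of N n, OF ndec', of k a] Zadj_ket[of k N a n] by auto
  then show ?thesis
    using ker_Zop_eq_ker_absZ ker_Zop_eq_span isometric_iso_Zop_Zadj[of N n, OF ndec']
      Zop_Zadj_image[of N n, OF ndec'] absZ_image[of N n, OF ndec']
    by simp
qed

end
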